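(* If $\{x_k\}_{k\ge0}$ is log-convex, then the sequence $z_n=\sum_{k=0}^n\binom{n+k}{n-k}x_k$, $n\ge 0$, is log-convex.
   Context: A sequence $a_0,a_1,\ldots$ of nonnegative reals is log-convex if $a_{k-1}a_{k+1}\ge a_k^2$ for all $k\ge1$. *)

theory Defs
  imports Complex_Main
begin

definition log_convex :: "(nat \<Rightarrow> real) \<Rightarrow> bool" where
  "log_convex a \<longleftrightarrow> (\<forall>k. 0 \<le> a k) \<and> (\<forall>k\<ge>1. a (k - 1) * a (k + 1) \<ge> (a k)^2)"

end

theory Submission
  imports Defs
begin

text \<open>
  Write c n k = (n + k choose 2k), so that z n = \<Sum>k. c n k * x k. The defect
  2 (z p * z (p + 2) - (z (p + 1))^2) is the quadratic form \<Sum>i j. S i j * x i * x j, and the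
  contiguity relations of the c n k make its kernel telescope:
  S i j = [i + j = 1] + F i (j - 1) - F (i - 1) j with F i j = (j - i) c i c j / (i + j)
  taken in the middle row p + 1. Summation by parts turns the form into a nonnegative
  diagonal term plus \<Sum>i j. F i j * (x i * x (j + 1) - x (i + 1) * x j), and each summand is
  nonnegative: F i j has the sign of j - i, and so has x i * x (j + 1) - x (i + 1) * x j,
  because the ratios x (k + 1) / x k of a log-convex sequence increase.
\<close>

lemma log_convex_nonneg: "log_convex x \<Longrightarrow> 0 \<le> x k"
  unfolding log_convex_def by blast

lemma log_convex_Suc: "log_convex x \<Longrightarrow> (x (Suc k))\<^sup>2 \<le> x k * x (Suc (Suc k))"
  unfolding log_convex_def by (metis Suc_eq_plus1 diff_Suc_1 le_add2)

lemma log_convex_zero_imp_zero_Suc: "log_convex x \<Longrightarrow> x k = 0 \<Longrightarrow> x (Suc k) = 0"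
  using log_convex_Suc[of x k] by simp

lemma log_convex_cross_mono:
  assumes lc: "log_convex x" and "p \<le> q"
  shows "x (Suc p) * x q \<le> x p * x (Suc q)"
  using \<open>p \<le> q\<close>
proof (induction q rule: dec_induct)
  case base
  then show ?case by (simp add: mult.commute)
next
  case (step q)
  note nn = log_convex_nonneg[OF lc]
  show ?case
  proof (cases "x (Suc q) = 0")
    case True
    then show ?thesis using nn by simp
  next
    case False
    then have pos: "0 < x q * x (Suc q)"
      using nn[of q] nn[of "Suc q"] log_convex_zero_imp_zero_Suc[OF lc, of q]
      by (metis less_eq_real_def mult_pos_pos)
    have "(x (Suc p) * x (Suc q)) * (x q * x (Suc q)) = (x (Suc p) * x q) * (x (Suc q))\<^sup>2"
      by (simp add: power2_eq_square algebra_simps)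
    also have "\<dots> \<le> (x p * x (Suc q)) * (x q * x (Suc (Suc q)))"
      by (rule mult_mono[OF step.IH log_convex_Suc[OF lc]]) (simp_all add: nn)
    also have "\<dots> = (x p * x (Suc (Suc q))) * (x q * x (Suc q))"
      by (simp add: algebra_simps)
    finally show ?thesis using pos by (simp add: mult_le_cancel_right_pos)
  qed
qed

(* (n + k choose n - k) in the form (n + k choose 2k), which vanishes for k > n, so that
   consecutive rows can be summed over a common range. *)
definition zcoeff :: "nat \<Rightarrow> nat \<Rightarrow> real" where
  "zcoeff n k = real ((n + k) choose (2 * k))"

lemma zcoeff_eq_0: "n < k \<Longrightarrow> zcoeff n k = 0"
  unfolding zcoeff_def by (simp add: binomial_eq_0)

lemma zcoeff_0 [simp]: "zcoeff n 0 = 1"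
  unfolding zcoeff_def by simp

lemma zcoeff_nonneg: "0 \<le> zcoeff n k"
  unfolding zcoeff_def by simp

lemma choose_eq_zcoeff:
  assumes "k \<le> n"
  shows "real ((n + k) choose (n - k)) = zcoeff n k"
proof -
  have "(n + k) choose (n - k) = (n + k) choose ((n + k) - (n - k))"
    by (rule binomial_symmetric) simp
  also have "(n + k) - (n - k) = 2 * k"
    using assms by simp
  finally show ?thesis
    unfolding zcoeff_def by simp
qed

lemma sum_choose_eq_sum_zcoeff:
  assumes "n \<le> m"
  shows "(\<Sum>k=0..n. real ((n + k) choose (n - k)) * x k) = (\<Sum>k\<le>m. zcoeff n k * x k)"
proof -
  have "(\<Sum>k=0..n. real ((n + k) choose (n - k)) * x k) = (\<Sum>k\<le>n. zcoeff n k * x k)"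
    unfolding atLeast0AtMost by (intro sum.cong refl) (simp add: choose_eq_zcoeff)
  also have "\<dots> = (\<Sum>k\<le>m. zcoeff n k * x k)"
    using assms by (intro sum.mono_neutral_left) (auto simp: zcoeff_eq_0)
  finally show ?thesis .
qed

lemma zcoeff_Suc_row:
  "real (Suc n + k) * zcoeff n k = (real (Suc n) - real k) * zcoeff (Suc n) k"
proof (cases "k \<le> Suc n")
  case True
  have "(Suc (n + k) - 2 * k) * (Suc (n + k) choose (2 * k)) = Suc (n + k) * ((n + k) choose (2 * k))"
    using binomial_absorb_comp[of "Suc (n + k)" "2 * k"] by simp
  then have "real (Suc (n + k) - 2 * k) * real (Suc (n + k) choose (2 * k))
      = real (Suc (n + k)) * real ((n + k) choose (2 * k))"
    by (metis of_nat_mult)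
  moreover have "real (Suc (n + k) - 2 * k) = real (Suc n) - real k"
    using True by (simp add: of_nat_diff)
  ultimately show ?thesis
    unfolding zcoeff_def by (simp add: algebra_simps)
next
  case False
  then show ?thesis by (simp add: zcoeff_eq_0)
qed

lemma zcoeff_Suc_col:
  "real (2 * Suc k) * real (Suc (2 * k)) * zcoeff n (Suc k)
    = real (n + Suc k) * (real n - real k) * zcoeff n k"
proof (cases "k \<le> n")
  case True
  define m where "m = n + k"
  have up: "real (Suc (Suc (2 * k))) * real (Suc m choose Suc (Suc (2 * k)))
      = real (Suc m) * real (m choose Suc (2 * k))"
    by (metis Suc_times_binomial of_nat_mult)
  have "Suc (2 * k) * (m choose Suc (2 * k)) = (n - k) * (m choose (2 * k))"
    using binomial_absorption[of "2 * k" m] binomial_absorb_comp[of m "2 * k"]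
    unfolding m_def by simp
  then have down: "real (Suc (2 * k)) * real (m choose Suc (2 * k))
      = (real n - real k) * real (m choose (2 * k))"
    using True by (metis of_nat_diff of_nat_mult)
  have "real (2 * Suc k) * real (Suc (2 * k)) * zcoeff n (Suc k)
      = real (Suc (2 * k)) * (real (Suc (Suc (2 * k))) * real (Suc m choose Suc (Suc (2 * k))))"
    unfolding zcoeff_def m_def by simp
  also have "\<dots> = real (Suc m) * (real (Suc (2 * k)) * real (m choose Suc (2 * k)))"
    unfolding up by simp
  also have "\<dots> = real (Suc m) * ((real n - real k) * real (m choose (2 * k)))"
    by (simp only: down)
  also have "\<dots> = real (n + Suc k) * (real n - real k) * zcoeff n k"
    unfolding zcoeff_def m_def by simp
  finally show ?thesis .
next
  case False
  then show ?thesis by (simp add: zcoeff_eq_0)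
qed

lemma zcoeff_pascal:
  "zcoeff (Suc (Suc n)) (Suc k) + zcoeff n (Suc k) = 2 * zcoeff (Suc n) (Suc k) + zcoeff (Suc n) k"
proof -
  define m where "m = n + k"
  define l where "l = 2 * k"
  have "(Suc (Suc (Suc m)) choose Suc (Suc l)) + (Suc m choose Suc (Suc l))
      = 2 * (Suc (Suc m) choose Suc (Suc l)) + (Suc m choose l)"
    using binomial_Suc_Suc[of "Suc (Suc m)" "Suc l"] binomial_Suc_Suc[of "Suc m" l]
      binomial_Suc_Suc[of "Suc m" "Suc l"]
    by linarith
  then have "real (Suc (Suc (Suc m)) choose Suc (Suc l)) + real (Suc m choose Suc (Suc l))
      = 2 * real (Suc (Suc m) choose Suc (Suc l)) + real (Suc m choose l)"
    by (metis of_nat_add of_nat_mult of_nat_numeral)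
  then show ?thesis
    unfolding zcoeff_def m_def l_def by simp
qed

(* u stands for (n+a-1)!/((2a)!(n-a+1)!) (zero for a > n + 1), the common factor of the four coefficients. *)
lemma zcoeff_neighbours:
  fixes p k :: nat
  defines "n \<equiv> real (Suc p)" and "a \<equiv> real (Suc k)"
  obtains u where
    "zcoeff (Suc p) k = 2 * a * (2 * a - 1) * u"
    "zcoeff (Suc p) (Suc k) = (n + a) * (n - a + 1) * u"
    "zcoeff p (Suc k) = (n - a) * (n - a + 1) * u"
    "zcoeff (Suc (Suc p)) (Suc k) = (n + a) * (n + a + 1) * u"
proof -
  define u where "u = zcoeff (Suc p) k / (2 * a * (2 * a - 1))"
  have nz: "2 * a * (2 * a - 1) \<noteq> 0" "n + a \<noteq> 0"
    unfolding n_def a_def by simp_all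
  have col: "zcoeff (Suc p) k = 2 * a * (2 * a - 1) * u"
    unfolding u_def using nz(1) by simp
  have "2 * a * (2 * a - 1) * zcoeff (Suc p) (Suc k) = (n + a) * (n - a + 1) * zcoeff (Suc p) k"
    using zcoeff_Suc_col[of k "Suc p"] unfolding n_def a_def by (simp add: algebra_simps)
  also have "\<dots> = 2 * a * (2 * a - 1) * ((n + a) * (n - a + 1) * u)"
    unfolding col by (simp add: algebra_simps)
  finally have mid: "zcoeff (Suc p) (Suc k) = (n + a) * (n - a + 1) * u"
    using mult_left_cancel[OF nz(1)] by blast
  have "(n + a) * zcoeff p (Suc k) = (n - a) * zcoeff (Suc p) (Suc k)"
    using zcoeff_Suc_row[of p "Suc k"] unfolding n_def a_def by (simp add: algebra_simps)
  also have "\<dots> = (n + a) * ((n - a) * (n - a + 1) * u)"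
    unfolding mid by (simp add: algebra_simps)
  finally have low: "zcoeff p (Suc k) = (n - a) * (n - a + 1) * u"
    using mult_left_cancel[OF nz(2)] by blast
  have "zcoeff (Suc (Suc p)) (Suc k) = 2 * zcoeff (Suc p) (Suc k) + zcoeff (Suc p) k - zcoeff p (Suc k)"
    using zcoeff_pascal[of p k] by simp
  also have "\<dots> = (n + a) * (n + a + 1) * u"
    unfolding col mid low by (simp add: algebra_simps)
  finally show ?thesis
    using that col mid low by blast
qed

definition defect_kernel :: "nat \<Rightarrow> nat \<Rightarrow> nat \<Rightarrow> real" where
  "defect_kernel p i j = zcoeff p i * zcoeff (Suc (Suc p)) j + zcoeff p j * zcoeff (Suc (Suc p)) i
     - 2 * zcoeff (Suc p) i * zcoeff (Suc p) j"

(* At i = j = 0 this is 0 / 0 = 0, which is exactly the value the telescoping identity needs. *)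
definition defect_flux :: "nat \<Rightarrow> nat \<Rightarrow> nat \<Rightarrow> real" where
  "defect_flux n i j = (real j - real i) * zcoeff n i * zcoeff n j / (real i + real j)"

lemma defect_kernel_sym: "defect_kernel p j i = defect_kernel p i j"
  unfolding defect_kernel_def by (simp add: algebra_simps)

lemma defect_flux_antisym: "defect_flux n j i = - defect_flux n i j"
  unfolding defect_flux_def by (simp add: algebra_simps minus_divide_left)

lemma defect_flux_0_left: "defect_flux n 0 k = (if k = 0 then 0 else zcoeff n k)"
  unfolding defect_flux_def by simp

lemma defect_kernel_0_left: "defect_kernel p 0 j = (if j = 0 then 0 else zcoeff (Suc p) (j - 1))"
proof (cases j)
  case (Suc k)
  then show ?thesis
    using zcoeff_pascal[of p k] unfolding defect_kernel_def by simp
qed (simp add: defect_kernel_def)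

lemma defect_kernel_Suc_Suc:
  "(real i + real j + 1) * defect_kernel p (Suc i) (Suc j)
    = (real j - real i - 1) * zcoeff (Suc p) (Suc i) * zcoeff (Suc p) j
      - (real j - real i + 1) * zcoeff (Suc p) i * zcoeff (Suc p) (Suc j)"
proof -
  obtain u where u:
    "zcoeff (Suc p) i = 2 * real (Suc i) * (2 * real (Suc i) - 1) * u"
    "zcoeff (Suc p) (Suc i) = (real (Suc p) + real (Suc i)) * (real (Suc p) - real (Suc i) + 1) * u"
    "zcoeff p (Suc i) = (real (Suc p) - real (Suc i)) * (real (Suc p) - real (Suc i) + 1) * u"
    "zcoeff (Suc (Suc p)) (Suc i) = (real (Suc p) + real (Suc i)) * (real (Suc p) + real (Suc i) + 1) * u"
    by (rule zcoeff_neighbours)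
  obtain v where v:
    "zcoeff (Suc p) j = 2 * real (Suc j) * (2 * real (Suc j) - 1) * v"
    "zcoeff (Suc p) (Suc j) = (real (Suc p) + real (Suc j)) * (real (Suc p) - real (Suc j) + 1) * v"
    "zcoeff p (Suc j) = (real (Suc p) - real (Suc j)) * (real (Suc p) - real (Suc j) + 1) * v"
    "zcoeff (Suc (Suc p)) (Suc j) = (real (Suc p) + real (Suc j)) * (real (Suc p) + real (Suc j) + 1) * v"
    by (rule zcoeff_neighbours)
  show ?thesis
    unfolding defect_kernel_def u v of_nat_Suc by algebra
qed

lemma defect_kernel_telescope:
  "defect_kernel p i j = (if i + j = 1 then 1 else 0)
     + (if j = 0 then 0 else defect_flux (Suc p) i (j - 1))
     - (if i = 0 then 0 else defect_flux (Suc p) (i - 1) j)"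
proof -
  have zero_left: "defect_kernel p 0 k
      = (if k = 1 then 1 else 0) + (if k = 0 then 0 else defect_flux (Suc p) 0 (k - 1))" for k
    by (cases k) (simp_all add: defect_kernel_0_left defect_flux_0_left)
  show ?thesis
  proof (cases i)
    case 0
    then show ?thesis using zero_left[of j] by simp
  next
    case (Suc i')
    show ?thesis
    proof (cases j)
      case 0
      then show ?thesis
        using zero_left[of i] \<open>i = Suc i'\<close> defect_kernel_sym[of p 0 i] defect_flux_antisym[of _ 0 i']
        by simp
    next
      case (Suc j')
      have "real i' + real j' + 1 > 0" by simp
      then have "defect_kernel p (Suc i') (Suc j')
          = ((real j' - real i' - 1) * zcoeff (Suc p) (Suc i') * zcoeff (Suc p) j'
            - (real j' - real i' + 1) * zcoeff (Suc p) i' * zcoeff (Suc p) (Suc j')) / (real i' + real j' + 1)"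
        using defect_kernel_Suc_Suc[of i' j' p] by (simp add: field_simps)
      also have "\<dots> = defect_flux (Suc p) (Suc i') j' - defect_flux (Suc p) i' (Suc j')"
        unfolding defect_flux_def diff_divide_distrib of_nat_Suc by (simp add: algebra_simps)
      finally show ?thesis using \<open>i = Suc i'\<close> \<open>j = Suc j'\<close> by simp
    qed
  qed
qed

lemma defect_flux_mult_cross_nonneg:
  assumes "log_convex x"
  shows "0 \<le> defect_flux n i j * (x i * x (Suc j) - x (Suc i) * x j)"
proof (cases "i \<le> j")
  case True
  have "0 \<le> defect_flux n i j"
    unfolding defect_flux_def using True by (simp add: zcoeff_nonneg)
  moreover have "0 \<le> x i * x (Suc j) - x (Suc i) * x j"
    using log_convex_cross_mono[OF assms True] by simp
  ultimately show ?thesis by simp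
next
  case False
  have "defect_flux n i j \<le> 0"
    unfolding defect_flux_def using False
    by (intro divide_nonpos_nonneg mult_nonpos_nonneg) (simp_all add: zcoeff_nonneg)
  moreover have "x i * x (Suc j) - x (Suc i) * x j \<le> 0"
    using log_convex_cross_mono[OF assms, of j i] False by (simp add: mult.commute)
  ultimately show ?thesis by (simp add: mult_nonpos_nonpos)
qed

lemma sum_atMost_shift_pred:
  fixes f :: "nat \<Rightarrow> 'a::comm_monoid_add"
  assumes "f K = 0"
  shows "(\<Sum>j\<le>K. if j = 0 then 0 else f (j - 1)) = (\<Sum>j\<le>K. f j)"
proof (cases K)
  case (Suc M)
  have "(\<Sum>j\<le>Suc M. if j = 0 then 0 else f (j - 1)) = (\<Sum>j\<le>M. f j)"
    by (simp add: sum.atMost_Suc_shift del: sum.atMost_Suc)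
  also have "\<dots> = (\<Sum>j\<le>Suc M. f j)"
    using assms Suc by simp
  finally show ?thesis using Suc by simp
qed (use assms in simp)

lemma sum_product_minus_square:
  fixes a b c x :: "'i \<Rightarrow> 'a::comm_ring_1"
  shows "2 * ((\<Sum>i\<in>A. a i * x i) * (\<Sum>i\<in>A. c i * x i) - (\<Sum>i\<in>A. b i * x i)\<^sup>2)
    = (\<Sum>i\<in>A. \<Sum>j\<in>A. (a i * c j + a j * c i - 2 * b i * b j) * (x i * x j))"
proof -
  have "(\<Sum>i\<in>A. a i * x i) * (\<Sum>i\<in>A. c i * x i) = (\<Sum>i\<in>A. \<Sum>j\<in>A. a i * c j * (x i * x j))"
    by (simp add: sum_product mult_ac)
  moreover have "(\<Sum>i\<in>A. \<Sum>j\<in>A. a i * c j * (x i * x j)) = (\<Sum>i\<in>A. \<Sum>j\<in>A. a j * c i * (x i * x j))"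
    by (subst sum.swap) (simp add: mult_ac)
  moreover have "(\<Sum>i\<in>A. b i * x i)\<^sup>2 = (\<Sum>i\<in>A. \<Sum>j\<in>A. b i * b j * (x i * x j))"
    by (simp add: power2_eq_square sum_product mult_ac)
  ultimately show ?thesis
    by (simp add: sum.distrib sum_subtractf sum_distrib_left algebra_simps mult_2)
qed

lemma defect_form_nonneg:
  fixes x :: "nat \<Rightarrow> real" and p :: nat
  assumes "log_convex x"
  defines "K \<equiv> Suc (Suc p)" and "F \<equiv> defect_flux (Suc p)"
  shows "0 \<le> (\<Sum>i\<le>K. \<Sum>j\<le>K. defect_kernel p i j * (x i * x j))"
proof -
  have F_K: "F K j = 0" "F i K = 0" for i j
    unfolding F_def K_def defect_flux_def by (simp_all add: zcoeff_eq_0)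
  have "(\<Sum>i\<le>K. \<Sum>j\<le>K. defect_kernel p i j * (x i * x j))
      = (\<Sum>i\<le>K. \<Sum>j\<le>K. (if i + j = 1 then 1 else 0) * (x i * x j))
        + (\<Sum>i\<le>K. \<Sum>j\<le>K. (if j = 0 then 0 else F i (j - 1)) * (x i * x j))
        - (\<Sum>i\<le>K. \<Sum>j\<le>K. (if i = 0 then 0 else F (i - 1) j) * (x i * x j))"
    unfolding defect_kernel_telescope F_def
    by (simp add: sum.distrib sum_subtractf algebra_simps del: sum.atMost_Suc)
  also have "(\<Sum>i\<le>K. \<Sum>j\<le>K. (if j = 0 then 0 else F i (j - 1)) * (x i * x j))
      = (\<Sum>i\<le>K. \<Sum>j\<le>K. F i j * (x i * x (Suc j)))"
  proof (rule sum.cong[OF refl])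
    fix i
    have "(\<Sum>j\<le>K. (if j = 0 then 0 else F i (j - 1)) * (x i * x j))
        = (\<Sum>j\<le>K. if j = 0 then 0 else F i (j - 1) * (x i * x (Suc (j - 1))))"
      by (rule sum.cong) auto
    also have "\<dots> = (\<Sum>j\<le>K. F i j * (x i * x (Suc j)))"
      by (rule sum_atMost_shift_pred) (simp add: F_K)
    finally show "(\<Sum>j\<le>K. (if j = 0 then 0 else F i (j - 1)) * (x i * x j))
        = (\<Sum>j\<le>K. F i j * (x i * x (Suc j)))" .
  qed
  also have "(\<Sum>i\<le>K. \<Sum>j\<le>K. (if i = 0 then 0 else F (i - 1) j) * (x i * x j))
      = (\<Sum>i\<le>K. \<Sum>j\<le>K. F i j * (x (Suc i) * x j))"
  proof -
    have "(\<Sum>i\<le>K. \<Sum>j\<le>K. (if i = 0 then 0 else F (i - 1) j) * (x i * x j))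
        = (\<Sum>i\<le>K. if i = 0 then 0 else \<Sum>j\<le>K. F (i - 1) j * (x (Suc (i - 1)) * x j))"
      by (rule sum.cong) auto
    also have "\<dots> = (\<Sum>i\<le>K. \<Sum>j\<le>K. F i j * (x (Suc i) * x j))"
      by (rule sum_atMost_shift_pred) (simp add: F_K)
    finally show ?thesis .
  qed
  finally have "(\<Sum>i\<le>K. \<Sum>j\<le>K. defect_kernel p i j * (x i * x j))
      = (\<Sum>i\<le>K. \<Sum>j\<le>K. (if i + j = 1 then 1 else 0) * (x i * x j))
        + (\<Sum>i\<le>K. \<Sum>j\<le>K. F i j * (x i * x (Suc j) - x (Suc i) * x j))"
    by (simp add: sum_subtractf right_diff_distrib del: sum.atMost_Suc)
  moreover have "0 \<le> (\<Sum>i\<le>K. \<Sum>j\<le>K. (if i + j = 1 then 1 else 0) * (x i * x j))"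
    using log_convex_nonneg[OF assms(1)] by (intro sum_nonneg) simp
  moreover have "0 \<le> (\<Sum>i\<le>K. \<Sum>j\<le>K. F i j * (x i * x (Suc j) - x (Suc i) * x j))"
    unfolding F_def by (intro sum_nonneg defect_flux_mult_cross_nonneg assms(1))
  ultimately show ?thesis by linarith
qed

lemma sum_zcoeff_log_convex_step:
  fixes x :: "nat \<Rightarrow> real" and p :: nat
  assumes "log_convex x"
  defines "K \<equiv> Suc (Suc p)"
  shows "(\<Sum>k\<le>K. zcoeff (Suc p) k * x k)\<^sup>2
    \<le> (\<Sum>k\<le>K. zcoeff p k * x k) * (\<Sum>k\<le>K. zcoeff (Suc (Suc p)) k * x k)"
  using sum_product_minus_square[of "zcoeff p" x "{..K}" "zcoeff (Suc (Suc p))" "zcoeff (Suc p)"]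
    defect_form_nonneg[OF assms(1), of p]
  unfolding K_def defect_kernel_def by (simp add: mult_ac del: sum.atMost_Suc)

theorem proposition4p9:
  fixes x :: "nat \<Rightarrow> real"
  assumes "log_convex x"
  shows "log_convex (\<lambda>n. \<Sum>k=0..n. real ((n + k) choose (n - k)) * x k)"
  unfolding log_convex_def
proof (intro conjI allI impI)
  fix n :: nat
  show "0 \<le> (\<Sum>k=0..n. real ((n + k) choose (n - k)) * x k)"
    using log_convex_nonneg[OF assms] by (intro sum_nonneg mult_nonneg_nonneg) simp_all
next
  fix n :: nat
  assume "1 \<le> n"
  then obtain p where n: "n = Suc p"
    by (cases n) auto
  have z: "(\<Sum>k=0..m. real ((m + k) choose (m - k)) * x k) = (\<Sum>k\<le>Suc (Suc p). zcoeff m k * x k)"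
    if "m \<le> Suc (Suc p)" for m
    using that by (rule sum_choose_eq_sum_zcoeff)
  show "(\<Sum>k=0..n. real ((n + k) choose (n - k)) * x k)\<^sup>2
      \<le> (\<Sum>k=0..n - 1. real ((n - 1 + k) choose (n - 1 - k)) * x k)
        * (\<Sum>k=0..n + 1. real ((n + 1 + k) choose (n + 1 - k)) * x k)"
    using sum_zcoeff_log_convex_step[OF assms, of p] z[of p] z[of "Suc p"] z[of "Suc (Suc p)"]
    unfolding n by simp
qed

end
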